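(* Let $0\le k\le n$. The number $F(k,n)$ of preference profiles for $n$ men and $n$ women having exactly $k$ pairs of soulmates is \[F(k,n)=\binom{n}{k}^2 k!\,(n-1)!^{2k}\left(\sum_{i=0}^{n-k} (-1)^{i}\binom{n-k}{i}^2 (n-1)!^{2i}\, i!\, n!^{2n-2k-2i}\right).\]
   Context: A preference profile for $n$ (labeled) men and $n$ (labeled) women consists of, for each man, a strict ranking of the women (bijection to $\{1,\dots,n\}$, 1 = favorite), and for each woman, a strict ranking of the men. A man and a woman are soulmates if each ranks the other first; the number of pairs of soulmates of a profile is the number of such man–woman pairs. *)

theory Defs
  imports Main "HOL-Library.FuncSet"
begin

text \<open>Men and women are both labelled by {0..<n}. A ranking of the other side by one
person is a bijection from {0..<n} onto {1..n} (1 = favourite), represented as an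
extensional function.\<close>

definition rankings :: "nat \<Rightarrow> (nat \<Rightarrow> nat) set" where
  "rankings n = {r \<in> {0..<n} \<rightarrow>\<^sub>E {1..n}. bij_betw r {0..<n} {1..n}}"

text \<open>A preference profile: (men's rankings of women, women's rankings of men).\<close>
definition profiles :: "nat \<Rightarrow> ((nat \<Rightarrow> nat \<Rightarrow> nat) \<times> (nat \<Rightarrow> nat \<Rightarrow> nat)) set" where
  "profiles n = ({0..<n} \<rightarrow>\<^sub>E rankings n) \<times> ({0..<n} \<rightarrow>\<^sub>E rankings n)"

definition soulmate_pairs :: "nat \<Rightarrow> (nat \<Rightarrow> nat \<Rightarrow> nat) \<times> (nat \<Rightarrow> nat \<Rightarrow> nat) \<Rightarrow> nat" where
  "soulmate_pairs n P = card {(m, w). m < n \<and> w < n \<and> fst P m w = 1 \<and> snd P w m = 1}"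

definition F :: "nat \<Rightarrow> nat \<Rightarrow> nat" where
  "F k n = card {P \<in> profiles n. soulmate_pairs n P = k}"

end

theory Submission
  imports Defs
begin

text \<open>Write s(P) for the number of soulmate pairs of a profile P. The binomial moments
sum_P (s(P) choose j) = sum_s (s choose j) F(s, n) determine F(k, n) by binomial inversion.
The j-th moment counts pairs (P, M) with M a j-element set of soulmate pairs of P, that is,
a partial matching of size j. There are (n choose j)^2 j! such M, and a fixed M consists of
soulmate pairs of exactly ((n-1)!^j n!^(n-j))^2 profiles: each of the 2j people matched by M
must rank their partner first, while everyone else ranks freely.\<close>

lemma prod_diff_eq_choose_fact: "(\<Prod>i<k. n - i) = (n choose k) * fact k"
proof (induction k)
  case (Suc k)
  have "(\<Prod>i<Suc k. n - i) = ((n - k) * (n choose k)) * fact k"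
    using Suc by simp
  also have "(n - k) * (n choose k) = Suc k * (n choose Suc k)"
    by (simp only: binomial_absorption binomial_absorb_comp)
  finally show ?case by (simp add: algebra_simps)
qed simp

lemma card_inj_PiE:
  assumes "finite A" "finite C"
  shows "card {f \<in> A \<rightarrow>\<^sub>E C. inj_on f A} = (card C choose card A) * fact (card A)"
  using card_inj_on_subset_funcset[OF assms(1,2) order.refl]
  by (simp add: atLeast0LessThan prod_diff_eq_choose_fact)

lemma card_inj_PiE_fixed_value:
  fixes A :: "'a set" and C :: "'b set"
  assumes "a \<in> A" "b \<in> C"
  shows "card {f \<in> A \<rightarrow>\<^sub>E C. inj_on f A \<and> f a = b} =
         card {g \<in> (A - {a}) \<rightarrow>\<^sub>E (C - {b}). inj_on g (A - {a})}"
proof -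
  define G where "G y = {g \<in> (A - {a}) \<rightarrow>\<^sub>E (C - {y}). inj_on g (A - {a})}" for y
  define extend :: "'b \<times> ('a \<Rightarrow> 'b) \<Rightarrow> 'a \<Rightarrow> 'b" where "extend = (\<lambda>(y, g). g(a := y))"
  have Sigma_eq:
    "Sigma C G = {(y, g). y \<in> C \<and> g \<in> (A - {a}) \<rightarrow>\<^sub>E (C - {y}) \<and> inj_on g (A - {a})}"
    unfolding G_def by auto
  have inj: "inj_on extend (Sigma C G)"
    using extensional_funcset_extend_domain_inj_onI[of a "A - {a}" C]
    by (simp add: extend_def Sigma_eq)
  have image_eq: "{f \<in> A \<rightarrow>\<^sub>E C. inj_on f A} = extend ` Sigma C G"
    unfolding extend_def Sigma_eq
    by (rule extensional_funcset_extend_domain_inj_on_eq[of a "A - {a}" C,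
          unfolded insert_Diff[OF assms(1)]]) simp
  have "{f \<in> A \<rightarrow>\<^sub>E C. inj_on f A \<and> f a = b}
      = {f \<in> {f \<in> A \<rightarrow>\<^sub>E C. inj_on f A}. f a = b}"
    by auto
  also have "\<dots> = extend ` {t \<in> Sigma C G. extend t a = b}"
    unfolding image_eq by blast
  also have "{t \<in> Sigma C G. extend t a = b} = {b} \<times> G b"
    using assms(2) by (auto simp: extend_def)
  also have "card (extend ` ({b} \<times> G b)) = card ({b} \<times> G b)"
    using assms(2) by (intro card_image inj_on_subset[OF inj]) auto
  finally show ?thesis by (simp add: card_cartesian_product G_def)
qed

lemma prod_if_mem:
  assumes "finite S" "B \<subseteq> S"
  shows "(\<Prod>x\<in>S. if x \<in> B then c else d) = c ^ card B * d ^ (card S - card B)"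
proof -
  have "(\<Prod>x\<in>S. if x \<in> B then c else d)
      = (\<Prod>x\<in>S \<inter> {x. x \<in> B}. c) * (\<Prod>x\<in>S \<inter> - {x. x \<in> B}. d)"
    using assms(1) by (rule prod.If_cases)
  also have "S \<inter> {x. x \<in> B} = B" using assms(2) by auto
  also have "S \<inter> - {x. x \<in> B} = S - B" by auto
  finally show ?thesis using assms by (simp add: card_Diff_subset finite_subset)
qed

lemma sum_comp_card_fibres:
  fixes g :: "nat \<Rightarrow> 'a::comm_semiring_1"
  assumes "finite X" "h ` X \<subseteq> {0..N}"
  shows "(\<Sum>x\<in>X. g (h x)) = (\<Sum>s=0..N. of_nat (card {x \<in> X. h x = s}) * g s)"
proof -
  have "(\<Sum>x\<in>X. g (h x)) = (\<Sum>s=0..N. \<Sum>x\<in>{x \<in> X. h x = s}. g (h x))"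
    by (rule sum.group[OF assms(1) finite_atLeastAtMost assms(2), symmetric])
  also have "\<dots> = (\<Sum>s=0..N. \<Sum>x\<in>{x \<in> X. h x = s}. g s)"
    by (intro sum.cong) auto
  finally show ?thesis by simp
qed

lemma choose_mult_add: "(n choose (k + i)) * ((k + i) choose k) = (n choose k) * ((n - k) choose i)"
proof (cases "k + i \<le> n")
  case True
  then show ?thesis using choose_mult[of k "k + i" n] by simp
next
  case False
  then show ?thesis by (cases "k \<le> n") (auto simp: binomial_eq_0)
qed

lemma alternating_sum_choose_choose:
  assumes "s \<le> N"
  shows "(\<Sum>i=0..N-k. (-1)^i * of_nat (k + i choose k) * of_nat (s choose (k + i)) :: 'a::comm_ring_1)
    = (if s = k then 1 else 0)"
proof (cases "k \<le> s")
  case True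
  have "(\<Sum>i=0..N-k. (-1)^i * of_nat (k + i choose k) * of_nat (s choose (k + i)) :: 'a)
      = (\<Sum>i=0..N-k. of_nat (s choose k) * ((-1)^i * of_nat (s - k choose i)))"
  proof (intro sum.cong refl)
    fix i
    have "of_nat (s choose (k + i)) * of_nat (k + i choose k) = (of_nat (s choose k) * of_nat (s - k choose i) :: 'a)"
      using choose_mult_add[of s k i] by (metis of_nat_mult)
    then show "(-1)^i * of_nat (k + i choose k) * of_nat (s choose (k + i))
      = (of_nat (s choose k) * ((-1)^i * of_nat (s - k choose i)) :: 'a)"
      by (simp add: algebra_simps)
  qed
  also have "\<dots> = of_nat (s choose k) * (\<Sum>i=0..N-k. (-1)^i * of_nat (s - k choose i))"
    by (simp add: sum_distrib_left)
  also have "(\<Sum>i=0..N-k. (-1)^i * of_nat (s - k choose i))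
      = (\<Sum>i\<le>s-k. (-1)^i * of_nat (s - k choose i) :: 'a)"
  proof (rule sum.mono_neutral_right)
    show "{..s-k} \<subseteq> {0..N-k}" using assms by auto
    show "\<forall>i\<in>{0..N-k} - {..s-k}. (-1)^i * of_nat (s - k choose i) = (0::'a)"
      by (simp add: binomial_eq_0)
  qed simp
  also have "\<dots> = (if s = k then 1 else 0)"
    using choose_alternating_sum[of "s - k", where 'a = 'a] True by auto
  finally show ?thesis by simp
next
  case False
  then show ?thesis by (auto simp: binomial_eq_0 intro!: sum.neutral)
qed

lemma binomial_inversion:
  fixes a b :: "nat \<Rightarrow> 'a::comm_ring_1"
  assumes "\<And>j. j \<le> N \<Longrightarrow> a j = (\<Sum>s=0..N. of_nat (s choose j) * b s)" and "k \<le> N"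
  shows "b k = (\<Sum>i=0..N-k. (-1)^i * of_nat (k + i choose k) * a (k + i))"
proof -
  have "(\<Sum>i=0..N-k. (-1)^i * of_nat (k + i choose k) * a (k + i))
      = (\<Sum>i=0..N-k. \<Sum>s=0..N. b s * ((-1)^i * of_nat (k + i choose k) * of_nat (s choose (k + i))))"
    using assms by (intro sum.cong refl) (simp add: sum_distrib_left algebra_simps)
  also have "\<dots> = (\<Sum>s=0..N. b s * (\<Sum>i=0..N-k. (-1)^i * of_nat (k + i choose k) * of_nat (s choose (k + i))))"
    by (subst sum.swap) (simp add: sum_distrib_left)
  also have "\<dots> = (\<Sum>s=0..N. b s * (if s = k then 1 else 0))"
    by (intro sum.cong refl) (simp add: alternating_sum_choose_choose)
  also have "\<dots> = b k"
    using assms(2) by (simp add: if_distrib sum.delta cong: if_cong)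
  finally show ?thesis ..
qed

definition partial_matchings :: "'a set \<Rightarrow> 'b set \<Rightarrow> nat \<Rightarrow> ('a \<times> 'b) set set" where
  "partial_matchings X Y j = {M. M \<subseteq> X \<times> Y \<and> inj_on fst M \<and> inj_on snd M \<and> card M = j}"

definition fun_graph :: "'a set \<Rightarrow> ('a \<Rightarrow> 'b) \<Rightarrow> ('a \<times> 'b) set" where
  "fun_graph A f = (\<lambda>a. (a, f a)) ` A"

lemma finite_partial_matchings: "finite X \<Longrightarrow> finite Y \<Longrightarrow> finite (partial_matchings X Y j)"
  unfolding partial_matchings_def by (rule finite_subset[of _ "Pow (X \<times> Y)"]) auto

lemma fun_graph_inject:
  assumes "f \<in> extensional A" "g \<in> extensional B" "fun_graph A f = fun_graph B g"
  shows "A = B \<and> f = g"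
proof -
  have "A = B"
    using arg_cong[OF assms(3), of "(`) fst"] by (simp add: fun_graph_def image_image)
  moreover have "f a = g a" if "a \<in> A" for a
  proof -
    have "(a, f a) \<in> fun_graph B g"
      using that unfolding assms(3)[symmetric] by (auto simp: fun_graph_def)
    then show ?thesis by (auto simp: fun_graph_def)
  qed
  ultimately show ?thesis
    using assms(1,2) extensionalityI[of f A g] by auto
qed

lemma fun_graph_partial_matching:
  assumes "A \<subseteq> X" "f \<in> A \<rightarrow>\<^sub>E Y" "inj_on f A"
  shows "fun_graph A f \<in> partial_matchings X Y (card A)"
  using assms
  by (auto simp: fun_graph_def partial_matchings_def inj_on_def card_image inj_on_convol_ident)

lemma partial_matching_eq_fun_graph:
  assumes "M \<in> partial_matchings X Y j"
  shows "\<exists>f \<in> fst ` M \<rightarrow>\<^sub>E Y. inj_on f (fst ` M) \<and> M = fun_graph (fst ` M) f"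
proof -
  have inj: "inj_on fst M" "inj_on snd M" and "M \<subseteq> X \<times> Y"
    using assms by (auto simp: partial_matchings_def)
  define f where "f = restrict (\<lambda>a. THE b. (a, b) \<in> M) (fst ` M)"
  have f_eq: "f a = b" if "(a, b) \<in> M" for a b
  proof -
    have "(THE b. (a, b) \<in> M) = b"
    proof (rule the_equality)
      fix b' assume "(a, b') \<in> M"
      then show "b' = b" using that inj_onD[OF inj(1), of "(a, b')" "(a, b)"] by simp
    qed (rule that)
    moreover have "a \<in> fst ` M" using that by force
    ultimately show ?thesis by (simp add: f_def)
  qed
  have graph_in_M: "(a, f a) \<in> M" if "a \<in> fst ` M" for a
    using that f_eq by auto
  have "M = fun_graph (fst ` M) f"
    using f_eq graph_in_M by (force simp: fun_graph_def)
  moreover have "f \<in> fst ` M \<rightarrow>\<^sub>E Y"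
  proof (rule PiE_I)
    show "f a \<in> Y" if "a \<in> fst ` M" for a
      using graph_in_M[OF that] \<open>M \<subseteq> X \<times> Y\<close> by auto
    show "f a = undefined" if "a \<notin> fst ` M" for a
      using that by (simp add: f_def)
  qed
  moreover have "inj_on f (fst ` M)"
  proof (rule inj_onI)
    fix a a' assume a: "a \<in> fst ` M" "a' \<in> fst ` M" "f a = f a'"
    from inj_onD[OF inj(2) _ graph_in_M[OF a(1)] graph_in_M[OF a(2)]] a(3) show "a = a'" by simp
  qed
  ultimately show ?thesis by blast
qed

lemma bij_betw_fun_graph_partial_matchings:
  "bij_betw (\<lambda>(A, f). fun_graph A f)
     (SIGMA A:{A. A \<subseteq> X \<and> card A = j}. {f \<in> A \<rightarrow>\<^sub>E Y. inj_on f A})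
     (partial_matchings X Y j)"
  (is "bij_betw ?graph ?S _")
proof (rule bij_betw_imageI)
  show "inj_on ?graph ?S"
  proof (rule inj_onI)
    fix x y assume "x \<in> ?S" "y \<in> ?S" "?graph x = ?graph y"
    moreover obtain A f B g where "x = (A, f)" "y = (B, g)" by fastforce
    ultimately show "x = y"
      using fun_graph_inject[of f A g B] by (auto simp: PiE_def)
  qed
next
  show "?graph ` ?S = partial_matchings X Y j"
  proof (intro equalityI subsetI)
    fix M assume "M \<in> ?graph ` ?S"
    then show "M \<in> partial_matchings X Y j"
      using fun_graph_partial_matching by auto
  next
    fix M assume M: "M \<in> partial_matchings X Y j"
    then obtain f where "f \<in> fst ` M \<rightarrow>\<^sub>E Y" "inj_on f (fst ` M)" "M = fun_graph (fst ` M) f"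
      using partial_matching_eq_fun_graph by blast
    moreover have "fst ` M \<subseteq> X" "card (fst ` M) = j"
      using M by (auto simp: partial_matchings_def card_image)
    ultimately show "M \<in> ?graph ` ?S"
      by force
  qed
qed

lemma card_partial_matchings:
  assumes "finite X" "finite Y"
  shows "card (partial_matchings X Y j) = (card X choose j) * (card Y choose j) * fact j"
proof -
  have "card (partial_matchings X Y j)
      = card (SIGMA A:{A. A \<subseteq> X \<and> card A = j}. {f \<in> A \<rightarrow>\<^sub>E Y. inj_on f A})"
    by (rule bij_betw_same_card[OF bij_betw_fun_graph_partial_matchings, symmetric])
  also have "\<dots> = (\<Sum>A | A \<subseteq> X \<and> card A = j. card {f \<in> A \<rightarrow>\<^sub>E Y. inj_on f A})"
  proof (rule card_SigmaI, use assms in simp, intro ballI)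
    show "finite {f \<in> A \<rightarrow>\<^sub>E Y. inj_on f A}" if "A \<in> {A. A \<subseteq> X \<and> card A = j}" for A
      using that finite_PiE[of A "\<lambda>_. Y"] finite_subset[of A X] assms by simp
  qed
  also have "\<dots> = (\<Sum>A | A \<subseteq> X \<and> card A = j. (card Y choose j) * fact j)"
    using assms by (intro sum.cong refl) (auto simp: card_inj_PiE finite_subset)
  also have "\<dots> = (card X choose j) * ((card Y choose j) * fact j)"
    using n_subsets[OF assms(1)] by simp
  finally show ?thesis by simp
qed

lemma partial_matching_card_le:
  assumes "M \<in> partial_matchings X Y j" "finite X"
  shows "j \<le> card X"
proof -
  have "j = card (fst ` M)"
    using assms(1) by (simp add: partial_matchings_def card_image)
  also have "\<dots> \<le> card X"
    using assms by (intro card_mono) (auto simp: partial_matchings_def)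
  finally show ?thesis .
qed

lemma rankings_eq_inj: "rankings n = {r \<in> {0..<n} \<rightarrow>\<^sub>E {1..n}. inj_on r {0..<n}}"
proof -
  have "r ` {0..<n} = {1..n}" if "r \<in> {0..<n} \<rightarrow>\<^sub>E {1..n}" "inj_on r {0..<n}" for r
    using that by (intro card_subset_eq) (auto simp: card_image)
  then show ?thesis by (auto simp: rankings_def bij_betw_def)
qed

lemma inj_on_ranking: "r \<in> rankings n \<Longrightarrow> inj_on r {0..<n}"
  by (simp add: rankings_def bij_betw_def)

lemma finite_rankings: "finite (rankings n)"
  by (rule finite_subset[OF _ finite_PiE[of "{0..<n}" "\<lambda>_. {1..n}"]]) (auto simp: rankings_def)

lemma finite_profiles: "finite (profiles n)"
  by (simp add: profiles_def finite_PiE finite_rankings)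

lemma card_rankings: "card (rankings n) = fact n"
  using card_inj_PiE[of "{0..<n}" "{1..n}"] by (simp add: rankings_eq_inj)

lemma card_rankings_favourite:
  assumes "w < n"
  shows "card {r \<in> rankings n. r w = 1} = fact (n - 1)"
proof -
  have "{r \<in> rankings n. r w = 1} = {r \<in> {0..<n} \<rightarrow>\<^sub>E {1..n}. inj_on r {0..<n} \<and> r w = 1}"
    by (auto simp: rankings_eq_inj)
  then have "card {r \<in> rankings n. r w = 1}
      = card {r \<in> ({0..<n} - {w}) \<rightarrow>\<^sub>E ({1..n} - {1}). inj_on r ({0..<n} - {w})}"
    using assms by (simp add: card_inj_PiE_fixed_value)
  also have "\<dots> = fact (n - 1)"
  proof -
    have "card ({0..<n} - {w}) = n - 1" "card ({1..n} - {1}) = n - 1"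
      using assms by simp_all
    then show ?thesis using card_inj_PiE[of "{0..<n} - {w}" "{1..n} - {1}"] by simp
  qed
  finally show ?thesis .
qed

definition rankings_with_favourites ::
    "nat \<Rightarrow> (nat \<times> nat) set \<Rightarrow> (nat \<Rightarrow> nat \<Rightarrow> nat) set" where
  "rankings_with_favourites n M = {R \<in> {0..<n} \<rightarrow>\<^sub>E rankings n. \<forall>(x, y)\<in>M. R x y = 1}"

lemma card_rankings_with_favourites:
  assumes "M \<subseteq> {0..<n} \<times> {0..<n}" "inj_on fst M"
  shows "card (rankings_with_favourites n M) = fact (n - 1) ^ card M * fact n ^ (n - card M)"
proof -
  define B where "B m = {r \<in> rankings n. \<forall>w. (m, w) \<in> M \<longrightarrow> r w = 1}" for m
  have "rankings_with_favourites n M = PiE {0..<n} B"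
  proof (intro equalityI subsetI)
    fix R assume "R \<in> rankings_with_favourites n M"
    then show "R \<in> PiE {0..<n} B" by (auto simp: rankings_with_favourites_def B_def PiE_iff)
  next
    fix R assume R: "R \<in> PiE {0..<n} B"
    have "R m w = 1" if "(m, w) \<in> M" for m w
      using that assms(1) PiE_mem[OF R, of m] by (auto simp: B_def)
    with R show "R \<in> rankings_with_favourites n M"
      by (auto simp: rankings_with_favourites_def B_def PiE_iff)
  qed
  moreover have "card (B m) = (if m \<in> fst ` M then fact (n - 1) else fact n)" for m
  proof (cases "m \<in> fst ` M")
    case True
    then obtain w where w: "(m, w) \<in> M" by force
    have unique: "w' = w" if "(m, w') \<in> M" for w'
      using inj_onD[OF assms(2), of "(m, w')" "(m, w)"] that w by simp
    have "B m = {r \<in> rankings n. r w = 1}"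
      using w unique unfolding B_def by blast
    moreover have "w < n" using w assms(1) by auto
    ultimately show ?thesis using True card_rankings_favourite by simp
  next
    case False
    then have "B m = rankings n" by (force simp: B_def)
    then show ?thesis using False by (simp add: card_rankings)
  qed
  moreover have "fst ` M \<subseteq> {0..<n}" "card (fst ` M) = card M"
    using assms by (auto simp: card_image)
  ultimately show ?thesis by (simp add: card_PiE prod_if_mem)
qed

definition soulmates ::
    "nat \<Rightarrow> (nat \<Rightarrow> nat \<Rightarrow> nat) \<times> (nat \<Rightarrow> nat \<Rightarrow> nat) \<Rightarrow> (nat \<times> nat) set" where
  "soulmates n P = {(m, w). m < n \<and> w < n \<and> fst P m w = 1 \<and> snd P w m = 1}"

lemma soulmates_partial_matching:
  assumes "P \<in> profiles n"
  shows "soulmates n P \<in> partial_matchings {0..<n} {0..<n} (soulmate_pairs n P)"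
proof -
  have inj: "inj_on (fst P m) {0..<n}" "inj_on (snd P m) {0..<n}" if "m < n" for m
  proof -
    have "fst P m \<in> rankings n" "snd P m \<in> rankings n"
      using assms that by (auto simp: profiles_def PiE_iff)
    then show "inj_on (fst P m) {0..<n}" "inj_on (snd P m) {0..<n}"
      by (simp_all add: inj_on_ranking)
  qed
  have unique_woman: "w = w'" if "(m, w) \<in> soulmates n P" "(m, w') \<in> soulmates n P" for m w w'
  proof -
    from that have "m < n" "w < n" "w' < n" and eq: "fst P m w = fst P m w'"
      by (auto simp: soulmates_def)
    then show ?thesis using inj_onD[OF inj(1)[OF \<open>m < n\<close>] eq] by simp
  qed
  have unique_man: "m = m'" if "(m, w) \<in> soulmates n P" "(m', w) \<in> soulmates n P" for m m' w
  proof -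
    from that have "w < n" "m < n" "m' < n" and eq: "snd P w m = snd P w m'"
      by (auto simp: soulmates_def)
    then show ?thesis using inj_onD[OF inj(2)[OF \<open>w < n\<close>] eq] by simp
  qed
  have "inj_on fst (soulmates n P)"
    by (rule inj_onI) (metis unique_woman prod.collapse)
  moreover have "inj_on snd (soulmates n P)"
    by (rule inj_onI) (metis unique_man prod.collapse)
  ultimately show ?thesis
    by (auto simp: partial_matchings_def soulmates_def soulmate_pairs_def)
qed

lemma soulmate_pairs_le: "P \<in> profiles n \<Longrightarrow> soulmate_pairs n P \<le> n"
  using partial_matching_card_le[OF soulmates_partial_matching] by simp

lemma card_profiles_with_soulmates:
  assumes "M \<subseteq> {0..<n} \<times> {0..<n}" "inj_on fst M" "inj_on snd M"
  shows "card {P \<in> profiles n. M \<subseteq> soulmates n P}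
    = (fact (n - 1) ^ card M * fact n ^ (n - card M))^2"
proof -
  have "{P \<in> profiles n. M \<subseteq> soulmates n P}
      = rankings_with_favourites n M \<times> rankings_with_favourites n (prod.swap ` M)"
    using assms(1) by (auto simp: profiles_def soulmates_def rankings_with_favourites_def)
  moreover have "prod.swap ` M \<subseteq> {0..<n} \<times> {0..<n}" "inj_on fst (prod.swap ` M)"
    using assms by (auto simp: inj_on_def)
  moreover have "card (prod.swap ` M) = card M"
    by (simp add: card_image)
  ultimately show ?thesis
    using assms by (simp add: card_cartesian_product card_rankings_with_favourites power2_eq_square)
qed

lemma sum_soulmate_pairs_choose:
  "(\<Sum>P\<in>profiles n. soulmate_pairs n P choose j)
    = (n choose j)^2 * fact j * (fact (n - 1) ^ j * fact n ^ (n - j))^2"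
proof -
  let ?PM = "partial_matchings {0..<n} {0..<n} j"
  have choose_eq: "soulmate_pairs n P choose j = card {M \<in> ?PM. M \<subseteq> soulmates n P}"
    if "P \<in> profiles n" for P
  proof -
    have S: "soulmates n P \<in> partial_matchings {0..<n} {0..<n} (soulmate_pairs n P)"
      using soulmates_partial_matching[OF that] .
    then have "{M \<in> ?PM. M \<subseteq> soulmates n P} = {M. M \<subseteq> soulmates n P \<and> card M = j}"
      by (auto simp: partial_matchings_def intro: inj_on_subset)
    moreover have "finite (soulmates n P)" "card (soulmates n P) = soulmate_pairs n P"
      using S by (auto simp: partial_matchings_def intro: finite_subset)
    ultimately show ?thesis
      using n_subsets[of "soulmates n P" j] by simp
  qed
  have "(\<Sum>P\<in>profiles n. soulmate_pairs n P choose j)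
      = (\<Sum>P\<in>profiles n. \<Sum>M\<in>{M \<in> ?PM. M \<subseteq> soulmates n P}. 1)"
    using choose_eq by simp
  also have "\<dots> = (\<Sum>M\<in>?PM. \<Sum>P\<in>{P \<in> profiles n. M \<subseteq> soulmates n P}. 1)"
    by (rule sum.swap_restrict) (simp_all add: finite_profiles finite_partial_matchings)
  also have "\<dots> = (\<Sum>M\<in>?PM. (fact (n - 1) ^ j * fact n ^ (n - j))^2)"
    by (intro sum.cong refl) (simp add: card_profiles_with_soulmates partial_matchings_def)
  also have "\<dots> = (n choose j)^2 * fact j * (fact (n - 1) ^ j * fact n ^ (n - j))^2"
    by (simp add: card_partial_matchings power2_eq_square)
  finally show ?thesis .
qed

lemma sum_choose_F:
  "(\<Sum>s=0..n. of_nat (s choose j) * int (F s n))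
    = int ((n choose j)^2 * fact j * (fact (n - 1) ^ j * fact n ^ (n - j))^2)"
proof -
  have "soulmate_pairs n ` profiles n \<subseteq> {0..n}"
    using soulmate_pairs_le by auto
  then have "(\<Sum>P\<in>profiles n. int (soulmate_pairs n P choose j))
      = (\<Sum>s=0..n. of_nat (card {P \<in> profiles n. soulmate_pairs n P = s}) * int (s choose j))"
    by (rule sum_comp_card_fibres[OF finite_profiles])
  then have "(\<Sum>s=0..n. of_nat (s choose j) * int (F s n))
      = (\<Sum>P\<in>profiles n. int (soulmate_pairs n P choose j))"
    by (simp add: F_def mult.commute)
  also have "\<dots> = int ((n choose j)^2 * fact j * (fact (n - 1) ^ j * fact n ^ (n - j))^2)"
    by (simp only: of_nat_sum[symmetric] sum_soulmate_pairs_choose)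
  finally show ?thesis .
qed

lemma moment_term_factorization:
  fixes X Y :: nat
  assumes "k + i \<le> n"
  shows "(k + i choose k) * ((n choose (k + i))^2 * fact (k + i) * (X ^ (k + i) * Y ^ (n - (k + i)))^2)
    = ((n choose k)^2 * fact k * X^(2*k)) * ((n - k choose i)^2 * X^(2*i) * fact i * Y^(2*n - 2*k - 2*i))"
proof -
  have fact_split: "fact (k + i) = (fact k * fact i * ((k + i) choose k) :: nat)"
    using binomial_fact_lemma[of k "k + i"] by simp
  have powers: "(X ^ (k + i) * Y ^ (n - (k + i)))^2 = X^(2*k) * X^(2*i) * Y^(2*n - 2*k - 2*i)"
  proof -
    have "2 * (k + i) = 2*k + 2*i" "2 * (n - (k + i)) = 2*n - 2*k - 2*i" by simp_all
    then show ?thesis by (simp only: power_mult_distrib power_mult[symmetric] mult.commute[of _ 2] power_add)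
  qed
  have "(k + i choose k) * ((n choose (k + i))^2 * fact (k + i) * (X ^ (k + i) * Y ^ (n - (k + i)))^2)
      = ((n choose (k + i)) * ((k + i) choose k))^2 * fact k * fact i * X^(2*k) * X^(2*i) * Y^(2*n - 2*k - 2*i)"
    unfolding powers fact_split by (simp only: power2_eq_square mult_ac)
  also have "\<dots> = ((n choose k) * ((n - k) choose i))^2 * fact k * fact i * X^(2*k) * X^(2*i) * Y^(2*n - 2*k - 2*i)"
    by (simp only: choose_mult_add)
  also have "\<dots> = ((n choose k)^2 * fact k * X^(2*k)) * ((n - k choose i)^2 * X^(2*i) * fact i * Y^(2*n - 2*k - 2*i))"
    by (simp only: power2_eq_square mult_ac)
  finally show ?thesis .
qed

theorem mainTheorem3:
  fixes k n :: nat
  assumes "k \<le> n"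
  shows "int (F k n) =
    int ((n choose k)^2 * fact k * (fact (n - 1))^(2*k)) *
    (\<Sum>i = 0..n - k. (-1)^i * int ((n - k choose i)^2 * (fact (n - 1))^(2*i) * fact i
        * (fact n)^(2*n - 2*k - 2*i)))"
proof -
  define moment where
    "moment j = int ((n choose j)^2 * fact j * (fact (n - 1) ^ j * fact n ^ (n - j))^2)" for j
  define c where "c = int ((n choose k)^2 * fact k * (fact (n - 1))^(2*k))"
  define t where
    "t i = int ((n - k choose i)^2 * (fact (n - 1))^(2*i) * fact i * (fact n)^(2*n - 2*k - 2*i))" for i
  have "int (F k n) = (\<Sum>i=0..n-k. (-1)^i * of_nat (k + i choose k) * moment (k + i))"
    using binomial_inversion[of n moment "\<lambda>s. int (F s n)" k] sum_choose_F assms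
    by (simp add: moment_def)
  also have "\<dots> = (\<Sum>i=0..n-k. c * ((-1)^i * t i))"
  proof (intro sum.cong refl)
    fix i assume "i \<in> {0..n-k}"
    then have "of_nat (k + i choose k) * moment (k + i) = c * t i"
      using moment_term_factorization[of k i n "fact (n - 1)" "fact n"] assms
      by (simp only: moment_def c_def t_def of_nat_mult[symmetric]) simp
    then show "(-1)^i * of_nat (k + i choose k) * moment (k + i) = c * ((-1)^i * t i)"
      by (simp only: mult.assoc mult.left_commute[of "(-1)^i"])
  qed
  finally show ?thesis by (simp add: c_def t_def sum_distrib_left)
qed

end
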